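(* For every tournament $X$ on $n$ vertices, the Redei–Berge polynomial satisfies $u_X(-m)=(-1)^n u_X(m)$.
   Context: A tournament is a digraph $X=(V,E)$ ($V$ finite, $E\subset\{(u,v)\in V\times V\mid u\ne v\}$) such that for any two distinct vertices $u,v$ exactly one of $(u,v),(v,u)$ lies in $E$. $\Sigma_V$ is the set of bijections $\sigma:[n]\to V$, $X\mathrm{Des}(\sigma)=\{i\in[n-1]\mid(\sigma_i,\sigma_{i+1})\in E\}$; $F_I=\sum x_{i_1}\cdots x_{i_n}$ over $1\le i_1\le\cdots\le i_n$ with $i_j<i_{j+1}$ for $j\in I$; $U_X=\sum_{\sigma\in\Sigma_V}F_{X\mathrm{Des}(\sigma)}$; $u_X(m)$ is the polynomial in $m$ given by $U_X(1,\dots,1,0,\dots)$ with $m$ ones. *)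

theory Defs
  imports "HOL-Combinatorics.Multiset_Permutations" "HOL-Computational_Algebra.Polynomial"
begin

definition tournament :: "'a set \<Rightarrow> ('a \<times> 'a) set \<Rightarrow> bool" where
  "tournament V E \<longleftrightarrow> finite V \<and> E \<subseteq> {(u, v). u \<in> V \<and> v \<in> V \<and> u \<noteq> v} \<and>
     (\<forall>u\<in>V. \<forall>v\<in>V. u \<noteq> v \<longrightarrow> ((u, v) \<in> E \<longleftrightarrow> (v, u) \<notin> E))"

text \<open>A bijection sigma : [n] -> V is encoded as the list [sigma_1, ..., sigma_n]
  (an element of permutations_of_set V). X-descent set, positions in {1..n-1}.\<close>
definition XDes :: "('a \<times> 'a) set \<Rightarrow> 'a list \<Rightarrow> nat set" where
  "XDes E \<sigma> = {i \<in> {1..length \<sigma> - 1}. (\<sigma> ! (i - 1), \<sigma> ! i) \<in> E}"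

text \<open>F_I(1,...,1,0,...) with m ones and degree n: the number of sequences
  1 <= i_1 <= ... <= i_n <= m with i_j < i_(j+1) for j in I
  (sequence stored as a list, i_j = list ! (j-1)).\<close>
definition F_ones :: "nat \<Rightarrow> nat set \<Rightarrow> nat \<Rightarrow> nat" where
  "F_ones n I m = card {is :: nat list. length is = n \<and> set is \<subseteq> {1..m} \<and> sorted is \<and>
       (\<forall>j\<in>I. is ! (j - 1) < is ! j)}"

definition U_ones :: "'a set \<Rightarrow> ('a \<times> 'a) set \<Rightarrow> nat \<Rightarrow> nat" where
  "U_ones V E m = (\<Sum>\<sigma>\<in>permutations_of_set V. F_ones (card V) (XDes E \<sigma>) m)"

definition u_poly :: "'a set \<Rightarrow> ('a \<times> 'a) set \<Rightarrow> real poly" where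
  "u_poly V E = (THE p. \<forall>m::nat. poly p (real m) = real (U_ones V E m))"

end

theory Submission
  imports Defs
begin

text \<open>Shifting the i-th entry of a sequence counted by F_I(1^m) by the number of
  weak steps before it gives a bijection onto strictly increasing sequences, so
  F_I(1^m) is the binomial coefficient (m + n - 1 - |I|) choose n, the value at m of
  the polynomial p_|I|(x) = (x - |I|)(x - |I| + 1)...(x - |I| + n - 1) / n!. Since
  p_k(-x) = (-1)^n p_(n-1-k)(x), it suffices to match orderings with d descents
  to orderings with n - 1 - d descents. In a tournament, reversal of the
  ordering does this: it turns the non-descents into descents and vice versa.\<close>

lemma sorted_wrt_less_nth_gap:
  fixes xs :: "nat list"
  assumes "sorted_wrt (<) xs" "i \<le> j" "j < length xs"
  shows "xs ! i + (j - i) \<le> xs ! j"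
  using assms(2,3)
proof (induction j)
  case (Suc j)
  show ?case
  proof (cases "i = Suc j")
    case False
    with Suc have "xs ! i + (j - i) \<le> xs ! j" "xs ! j < xs ! Suc j"
      using assms(1) by (simp_all add: sorted_wrt_nth_less)
    with False Suc.prems show ?thesis by simp
  qed simp
qed simp

lemma poly_eqI_of_nat:
  fixes p q :: "'a::{idom,ring_char_0} poly"
  assumes "\<And>m. poly p (of_nat m) = poly q (of_nat m)"
  shows "p = q"
proof (rule ccontr)
  assume "p \<noteq> q"
  then have "finite {x. poly (p - q) x = 0}" by (intro poly_roots_finite) simp
  moreover have "range (of_nat :: nat \<Rightarrow> 'a) \<subseteq> {x. poly (p - q) x = 0}" using assms by auto
  ultimately show False
    using finite_subset infinite_UNIV_char_0 finite_imageD[of "of_nat :: nat \<Rightarrow> 'a" UNIV] inj_of_nat by blast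
qed

definition strict_seqs :: "nat \<Rightarrow> nat \<Rightarrow> nat list set" where
  "strict_seqs n N = {xs. length xs = n \<and> sorted_wrt (<) xs \<and> set xs \<subseteq> {1..N}}"

definition weak_seqs :: "nat \<Rightarrow> nat set \<Rightarrow> nat \<Rightarrow> nat list set" where
  "weak_seqs n I m = {ys. length ys = n \<and> set ys \<subseteq> {1..m} \<and> sorted ys \<and>
     (\<forall>j\<in>I. ys ! (j - 1) < ys ! j)}"

lemma F_ones_eq_card_weak_seqs: "F_ones n I m = card (weak_seqs n I m)"
  by (simp add: F_ones_def weak_seqs_def)

lemma card_strict_seqs: "card (strict_seqs n N) = N choose n"
proof -
  have "bij_betw set (strict_seqs n N) {B. B \<subseteq> {1..N} \<and> card B = n}"
  proof (rule bij_betw_byWitness[where f' = sorted_list_of_set])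
    show "\<forall>xs\<in>strict_seqs n N. sorted_list_of_set (set xs) = xs"
      by (simp add: strict_seqs_def sorted_list_of_set.idem_if_sorted_distinct strict_sorted_iff)
    show "\<forall>B\<in>{B. B \<subseteq> {1..N} \<and> card B = n}. set (sorted_list_of_set B) = B"
      using finite_subset[OF _ finite_atLeastAtMost] by (metis mem_Collect_eq set_sorted_list_of_set)
    show "set ` strict_seqs n N \<subseteq> {B. B \<subseteq> {1..N} \<and> card B = n}"
      by (auto simp: strict_seqs_def strict_sorted_iff distinct_card)
    show "sorted_list_of_set ` {B. B \<subseteq> {1..N} \<and> card B = n} \<subseteq> strict_seqs n N"
      using finite_subset by (fastforce simp: strict_seqs_def)
  qed
  then show ?thesis
    using n_subsets[of "{1..N}" n] by (simp add: bij_betw_same_card)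
qed

lemma strict_seqs_nth_bounds:
  assumes "xs \<in> strict_seqs n N" "t < n"
  shows "t + 1 \<le> xs ! t" "xs ! t + (n - 1 - t) \<le> N"
proof -
  have xs: "length xs = n" "sorted_wrt (<) xs" "set xs \<subseteq> {1..N}"
    using assms(1) by (auto simp: strict_seqs_def)
  moreover have "xs ! 0 \<in> set xs" "xs ! (n - 1) \<in> set xs"
    using xs(1) assms(2) by simp_all
  ultimately have "1 \<le> xs ! 0" "xs ! (n - 1) \<le> N"
    by auto
  moreover have "xs ! 0 + t \<le> xs ! t" "xs ! t + (n - 1 - t) \<le> xs ! (n - 1)"
    using sorted_wrt_less_nth_gap[OF xs(2), of 0 t] sorted_wrt_less_nth_gap[OF xs(2), of t "n - 1"]
      xs(1) assms(2) by simp_all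
  ultimately show "t + 1 \<le> xs ! t" "xs ! t + (n - 1 - t) \<le> N"
    by simp_all
qed

text \<open>The number of steps up to position t at which a sequence counted by
  F_ones is allowed to stay constant. Adding it to the entry at index t makes
  the sequence strictly increasing.\<close>
definition weak_steps :: "nat set \<Rightarrow> nat \<Rightarrow> nat" where
  "weak_steps I t = card ({1..t} - I)"

lemma weak_steps_0 [simp]: "weak_steps I 0 = 0"
  by (simp add: weak_steps_def)

lemma weak_steps_Suc: "weak_steps I (Suc t) = weak_steps I t + (if Suc t \<in> I then 0 else 1)"
proof -
  have "{1..Suc t} - I = (if Suc t \<in> I then {1..t} - I else insert (Suc t) ({1..t} - I))"
    using le_Suc_eq by auto
  then show ?thesis by (simp add: weak_steps_def)
qed

lemma weak_steps_le: "weak_steps I t \<le> t"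
  by (induction t) (auto simp: weak_steps_Suc)

lemma weak_steps_add_bounds: "weak_steps I t \<le> weak_steps I (t + d)" "weak_steps I (t + d) \<le> weak_steps I t + d"
  by (induction d) (auto simp: weak_steps_Suc)

lemma weak_steps_eq_diff_card:
  assumes "I \<subseteq> {1..k}"
  shows "weak_steps I k = k - card I"
  using assms by (simp add: weak_steps_def card_Diff_subset finite_subset)

definition shift_seq :: "nat set \<Rightarrow> nat list \<Rightarrow> nat list" where
  "shift_seq I ys = map (\<lambda>t. ys ! t + weak_steps I t) [0..<length ys]"

definition unshift_seq :: "nat set \<Rightarrow> nat list \<Rightarrow> nat list" where
  "unshift_seq I xs = map (\<lambda>t. xs ! t - weak_steps I t) [0..<length xs]"

lemma shift_seq_in_strict_seqs:
  assumes "ys \<in> weak_seqs n I m"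
  shows "shift_seq I ys \<in> strict_seqs n (m + weak_steps I (n - 1))"
proof -
  let ?xs = "shift_seq I ys"
  have ys: "length ys = n" "set ys \<subseteq> {1..m}" "sorted ys" "\<forall>j\<in>I. ys ! (j - 1) < ys ! j"
    using assms by (auto simp: weak_seqs_def)
  have len: "length ?xs = n" and nth: "\<And>t. t < n \<Longrightarrow> ?xs ! t = ys ! t + weak_steps I t"
    using ys(1) by (simp_all add: shift_seq_def)
  have "?xs ! t < ?xs ! Suc t" if t: "Suc t < n" for t
  proof (cases "Suc t \<in> I")
    case True
    then have "ys ! t < ys ! Suc t" using ys(4) by force
    then show ?thesis using t nth[of t] nth[of "Suc t"] by (simp add: weak_steps_Suc True)
  next
    case False
    have "ys ! t \<le> ys ! Suc t" using ys(1,3) t by (simp add: sorted_iff_nth_Suc)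
    then show ?thesis using False t nth[of t] nth[of "Suc t"] by (simp add: weak_steps_Suc)
  qed
  then have "sorted_wrt (<) ?xs"
    using len by (simp add: sorted_wrt_iff_nth_Suc_transp)
  moreover have "?xs ! t \<in> {1..m + weak_steps I (n - 1)}" if t: "t < n" for t
  proof -
    have "ys ! t \<in> {1..m}" using ys(1,2) t nth_mem[of t ys] by blast
    then show ?thesis using t nth[of t] weak_steps_add_bounds(1)[of I t "n - 1 - t"] by auto
  qed
  then have "set ?xs \<subseteq> {1..m + weak_steps I (n - 1)}"
    using len by (auto simp: in_set_conv_nth)
  ultimately show ?thesis using len by (simp add: strict_seqs_def)
qed

lemma unshift_seq_in_weak_seqs:
  assumes I: "I \<subseteq> {1..n - 1}" and xs: "xs \<in> strict_seqs n (m + weak_steps I (n - 1))"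
  shows "unshift_seq I xs \<in> weak_seqs n I m"
proof -
  let ?ys = "unshift_seq I xs"
  have len_xs: "length xs = n" and sorted_xs: "sorted_wrt (<) xs"
    using xs by (auto simp: strict_seqs_def)
  have len: "length ?ys = n" and nth: "\<And>t. t < n \<Longrightarrow> ?ys ! t = xs ! t - weak_steps I t"
    using len_xs by (simp_all add: unshift_seq_def)
  have step: "?ys ! t \<le> ?ys ! Suc t" "Suc t \<in> I \<Longrightarrow> ?ys ! t < ?ys ! Suc t" if t: "Suc t < n" for t
    using sorted_wrt_nth_less[OF sorted_xs, of t "Suc t"] t len_xs nth[of t] nth[of "Suc t"]
      strict_seqs_nth_bounds(1)[OF xs, of t] weak_steps_le[of I t]
    by (auto simp: weak_steps_Suc)
  have "?ys ! t \<in> {1..m}" if t: "t < n" for t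
    using t nth[of t] strict_seqs_nth_bounds[OF xs t] weak_steps_le[of I t]
      weak_steps_add_bounds(2)[of I t "n - 1 - t"] by auto
  then have "set ?ys \<subseteq> {1..m}"
    using len by (auto simp: in_set_conv_nth)
  moreover have "sorted ?ys"
    using step(1) len by (simp add: sorted_iff_nth_Suc)
  moreover have "?ys ! (j - 1) < ?ys ! j" if "j \<in> I" for j
    using I that step(2)[of "j - 1"] by (cases j) auto
  ultimately show ?thesis using len by (simp add: weak_seqs_def)
qed

lemma F_ones_eq_choose:
  assumes "I \<subseteq> {1..n - 1}"
  shows "F_ones n I m = (m + (n - 1 - card I)) choose n"
proof -
  have "bij_betw (shift_seq I) (weak_seqs n I m) (strict_seqs n (m + weak_steps I (n - 1)))"
  proof (rule bij_betw_byWitness[where f' = "unshift_seq I"])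
    show "\<forall>ys\<in>weak_seqs n I m. unshift_seq I (shift_seq I ys) = ys"
      by (auto simp: shift_seq_def unshift_seq_def intro!: nth_equalityI)
    show "\<forall>xs\<in>strict_seqs n (m + weak_steps I (n - 1)). shift_seq I (unshift_seq I xs) = xs"
    proof
      fix xs assume xs: "xs \<in> strict_seqs n (m + weak_steps I (n - 1))"
      have "weak_steps I t \<le> xs ! t" if "t < n" for t
        using strict_seqs_nth_bounds(1)[OF xs that] weak_steps_le[of I t] by simp
      then show "shift_seq I (unshift_seq I xs) = xs"
        using xs by (auto simp: shift_seq_def unshift_seq_def strict_seqs_def intro!: nth_equalityI)
    qed
    show "shift_seq I ` weak_seqs n I m \<subseteq> strict_seqs n (m + weak_steps I (n - 1))"
      using shift_seq_in_strict_seqs by blast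
    show "unshift_seq I ` strict_seqs n (m + weak_steps I (n - 1)) \<subseteq> weak_seqs n I m"
      using unshift_seq_in_weak_seqs[OF assms] by blast
  qed
  then show ?thesis
    using assms by (simp add: F_ones_eq_card_weak_seqs bij_betw_same_card card_strict_seqs
        weak_steps_eq_diff_card)
qed

definition shifted_binomial_poly :: "nat \<Rightarrow> nat \<Rightarrow> real poly" where
  "shifted_binomial_poly n k = smult (1 / fact n) (\<Prod>i<n. [:real i - real k, 1:])"

lemma poly_shifted_binomial_poly:
  "poly (shifted_binomial_poly n k) x = pochhammer (x - real k) n / fact n"
  by (simp add: shifted_binomial_poly_def poly_prod pochhammer_prod lessThan_atLeast0 algebra_simps)

lemma poly_shifted_binomial_poly_of_nat:
  assumes "k \<le> n - 1"
  shows "poly (shifted_binomial_poly n k) (real m) = real ((m + (n - 1 - k)) choose n)"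
proof (cases "n = 0")
  case False
  have "real ((m + (n - 1 - k)) choose n) = real (m + (n - 1 - k)) gchoose n"
    by (rule binomial_gbinomial)
  also have "\<dots> = pochhammer (real (m + (n - 1 - k)) - real n + 1) n / fact n"
    by (rule gbinomial_pochhammer')
  also have "real (m + (n - 1 - k)) - real n + 1 = real m - real k"
    using assms False by (simp add: of_nat_diff)
  finally show ?thesis by (simp add: poly_shifted_binomial_poly)
qed (simp add: poly_shifted_binomial_poly)

lemma poly_shifted_binomial_poly_minus:
  assumes "k \<le> n - 1"
  shows "poly (shifted_binomial_poly n k) (- x) = (-1) ^ n * poly (shifted_binomial_poly n (n - 1 - k)) x"
proof (cases "n = 0")
  case False
  have "x - real (n - 1 - k) = (x + real k) - real n + 1"
    using assms False by (simp add: of_nat_diff)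
  then have "pochhammer (x - real (n - 1 - k)) n = (-1) ^ n * pochhammer (- x - real k) n"
    by (simp only: pochhammer_minus') simp
  then have "(-1) ^ n * pochhammer (x - real (n - 1 - k)) n = pochhammer (- x - real k) n"
    by (simp flip: power_add)
  then show ?thesis by (simp add: poly_shifted_binomial_poly)
qed (simp add: poly_shifted_binomial_poly)

lemma XDes_subset: "XDes E \<sigma> \<subseteq> {1..length \<sigma> - 1}"
  by (auto simp: XDes_def)

lemma card_XDes_le: "card (XDes E \<sigma>) \<le> length \<sigma> - 1"
  using card_mono[OF _ XDes_subset] by simp

lemma U_ones_eq_sum_choose:
  "U_ones V E m = (\<Sum>\<sigma>\<in>permutations_of_set V. (m + (card V - 1 - card (XDes E \<sigma>))) choose card V)"
  unfolding U_ones_def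
  by (intro sum.cong refl) (metis F_ones_eq_choose XDes_subset length_finite_permutations_of_set)

lemma u_poly_eq_sum:
  "u_poly V E = (\<Sum>\<sigma>\<in>permutations_of_set V. shifted_binomial_poly (card V) (card (XDes E \<sigma>)))"
  (is "_ = ?P")
proof -
  have P: "poly ?P (real m) = real (U_ones V E m)" for m
    unfolding U_ones_eq_sum_choose poly_sum of_nat_sum
    by (intro sum.cong refl poly_shifted_binomial_poly_of_nat)
      (metis card_XDes_le length_finite_permutations_of_set)
  show ?thesis
    unfolding u_poly_def
  proof (rule the_equality)
    fix q assume "\<forall>m::nat. poly q (real m) = real (U_ones V E m)"
    then show "q = ?P" using P by (intro poly_eqI_of_nat) simp
  qed (use P in simp)
qed

lemma card_XDes_rev:
  assumes T: "tournament V E" and \<sigma>: "\<sigma> \<in> permutations_of_set V"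
  shows "card (XDes E (rev \<sigma>)) = length \<sigma> - 1 - card (XDes E \<sigma>)"
proof -
  define n where "n = length \<sigma>"
  have \<sigma>_set: "set \<sigma> = V" "distinct \<sigma>" using \<sigma> by (auto simp: permutations_of_set_def)
  have edge_flip: "(\<sigma> ! j, \<sigma> ! (j - 1)) \<in> E \<longleftrightarrow> (\<sigma> ! (j - 1), \<sigma> ! j) \<notin> E"
    if j: "j \<in> {1..n - 1}" for j
  proof -
    have "\<sigma> ! (j - 1) \<in> V" "\<sigma> ! j \<in> V" "\<sigma> ! (j - 1) \<noteq> \<sigma> ! j"
      using j \<sigma>_set by (auto simp: n_def nth_eq_iff_index_eq)
    then show ?thesis using T unfolding tournament_def by metis
  qed
  have rev_mem: "i \<in> XDes E (rev \<sigma>) \<longleftrightarrow> i \<in> {1..n - 1} \<and> n - i \<notin> XDes E \<sigma>" for i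
  proof (cases "i \<in> {1..n - 1}")
    case True
    then have "rev \<sigma> ! (i - 1) = \<sigma> ! (n - i)" "rev \<sigma> ! i = \<sigma> ! (n - i - 1)" "n - i \<in> {1..n - 1}"
      by (auto simp: rev_nth n_def Suc_diff_Suc)
    then show ?thesis using True edge_flip[of "n - i"] by (auto simp: XDes_def n_def)
  qed (auto simp: XDes_def n_def)
  have "XDes E (rev \<sigma>) = (\<lambda>j. n - j) ` ({1..n - 1} - XDes E \<sigma>)"
  proof (rule set_eqI)
    fix i
    have "i \<in> (\<lambda>j. n - j) ` ({1..n - 1} - XDes E \<sigma>) \<longleftrightarrow> i \<in> {1..n - 1} \<and> n - i \<notin> XDes E \<sigma>"
    proof
      assume "i \<in> (\<lambda>j. n - j) ` ({1..n - 1} - XDes E \<sigma>)"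
      then obtain j where "j \<in> {1..n - 1}" "j \<notin> XDes E \<sigma>" "i = n - j" by blast
      moreover have "n - (n - j) = j" using \<open>j \<in> {1..n - 1}\<close> by auto
      ultimately show "i \<in> {1..n - 1} \<and> n - i \<notin> XDes E \<sigma>"
        by auto
    next
      assume "i \<in> {1..n - 1} \<and> n - i \<notin> XDes E \<sigma>"
      then show "i \<in> (\<lambda>j. n - j) ` ({1..n - 1} - XDes E \<sigma>)"
        by (intro image_eqI[where x = "n - i"]) auto
    qed
    then show "i \<in> XDes E (rev \<sigma>) \<longleftrightarrow> i \<in> (\<lambda>j. n - j) ` ({1..n - 1} - XDes E \<sigma>)"
      using rev_mem by blast
  qed
  moreover have "inj_on (\<lambda>j. n - j) ({1..n - 1} - XDes E \<sigma>)"
    by (auto simp: inj_on_def)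
  ultimately show ?thesis
    using XDes_subset[of E \<sigma>] by (simp add: card_image card_Diff_subset finite_subset n_def)
qed

theorem mainTheorem18:
  fixes V :: "'a set" and E :: "('a \<times> 'a) set" and n :: nat
  assumes "tournament V E" and "card V = n"
  shows "\<forall>x::real. poly (u_poly V E) (- x) = (-1) ^ n * poly (u_poly V E) x"
proof
  fix x :: real
  let ?b = "\<lambda>\<sigma>. poly (shifted_binomial_poly n (card (XDes E \<sigma>))) x"
  have "poly (u_poly V E) (- x) =
      (\<Sum>\<sigma>\<in>permutations_of_set V. poly (shifted_binomial_poly n (card (XDes E \<sigma>))) (- x))"
    using assms(2) by (simp add: u_poly_eq_sum poly_sum)
  also have "\<dots> = (\<Sum>\<sigma>\<in>permutations_of_set V. (-1) ^ n * ?b (rev \<sigma>))"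
  proof (rule sum.cong [OF refl])
    fix \<sigma> assume \<sigma>: "\<sigma> \<in> permutations_of_set V"
    then have "length \<sigma> = n"
      using assms(2) by (simp add: length_finite_permutations_of_set)
    then show "poly (shifted_binomial_poly n (card (XDes E \<sigma>))) (- x) = (-1) ^ n * ?b (rev \<sigma>)"
      using poly_shifted_binomial_poly_minus card_XDes_le[of E \<sigma>] card_XDes_rev[OF assms(1) \<sigma>]
      by simp
  qed
  also have "\<dots> = (-1) ^ n * (\<Sum>\<sigma>\<in>rev ` permutations_of_set V. ?b \<sigma>)"
    by (simp add: sum_distrib_left sum.reindex inj_on_def del: rev_permutations_of_set)
  also have "\<dots> = (-1) ^ n * poly (u_poly V E) x"
    using assms(2) by (simp add: u_poly_eq_sum poly_sum)
  finally show "poly (u_poly V E) (- x) = (-1) ^ n * poly (u_poly V E) x" .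
qed

end
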